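(* Let $p>1$ and $q>1$. Let $X$ be an $\mathbb{R}$-smooth Banach space, $Y$ a Banach space, $\mathcal{D}(A)\subset\mathcal{D}(B)\subset X$ subspaces, and $A:\mathcal{D}(A)\to X$, $B:\mathcal{D}(B)\to Y$ (possibly nonlinear) operators. Let $y\in\mathcal{D}(A)$ satisfy $A(y)=0$ and $B(y)=0$. Let $y_\theta\in\mathcal{D}(A)$ and set $\mathcal{R}_{eq}=A(y_\theta)$, $\mathcal{R}_{bn}=B(y_\theta)$, $\mathcal{E}=\|y_\theta-y\|^q$. Assume $A$ is $(p,\psi)$-coercive with function $\Lambda$, and $\psi$ is subordinate to $B$ (on $\mathcal{D}(A)$) with functions $\gamma$ and $\rho$. Then $$\mathcal{E}\le p^{\frac qp}\left(\gamma(y_\theta,y)\rho(\mathcal{R}_{bn})+\frac1p\Lambda^p(y_\theta,y)\|\mathcal{R}_{eq}\|^p\right)^{\frac qp}.$$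
   Context: $X$ is $\mathbb{R}$-smooth if for all $y$ with $\|y\|=1$ and all $\chi\in X$ the limit $D(\|\cdot\|)(y;\chi)=\lim_{\mathbb{R}\ni s\to0}\frac{\|y+s\chi\|-\|y\|}{s}$ exists (hence it exists for every $y\ne0$). Real $p$-form: $\langle y_1,y_2\rangle_p:=\|y_2\|^{p-1}D(\|\cdot\|)(y_2;y_1)$ for $y_2\neq0$, $\langle y_1,0\rangle_p:=0$ (equivalently $\|y_2\|^{p-2}\mathrm{Re}[y_1,y_2]$ with the semi-inner product $[\chi,y]=\|y\|(D(\|\cdot\|)(y;\chi)-iD(\|\cdot\|)(y;i\chi))$). $A$ is $(p,\psi)$-coercive, for $\psi:\mathcal{D}(A)\times\mathcal{D}(A)\to\mathbb{R}$, if $\|\chi-y\|^p\le\psi(\chi,y)+\Lambda(\chi,y)\langle A(\chi)-A(y),\chi-y\rangle_p$ for all $\chi,y\in\mathcal{D}(A)$, with some $\Lambda(\chi,y)\ge0$. $\psi$ is subordinate to $B$ if there is $\rho\in C(Y;\mathbb{R}^+)$ with $\rho(\xi)\to0$ as $\xi\to0$ and $|\psi(\chi,y)|\le\gamma(\chi,y)\rho(B(\chi)-B(y))$ for all $\chi,y\in\mathcal{D}(A)$, with some $\gamma(\chi,y)\ge0$. *)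

theory Defs
  imports "HOL-Analysis.Analysis"
begin

definition norm_dir_deriv :: "'a::real_normed_vector \<Rightarrow> 'a \<Rightarrow> real" where
  "norm_dir_deriv y x = Lim (at (0::real)) (\<lambda>s. (norm (y + s *\<^sub>R x) - norm y) / s)"

definition R_smooth :: "'a::real_normed_vector itself \<Rightarrow> bool" where
  "R_smooth _ \<longleftrightarrow> (\<forall>(y::'a) x. norm y = 1 \<longrightarrow>
      (\<exists>L. ((\<lambda>s::real. (norm (y + s *\<^sub>R x) - norm y) / s) \<longlongrightarrow> L) (at 0)))"

definition p_form :: "real \<Rightarrow> 'a::real_normed_vector \<Rightarrow> 'a \<Rightarrow> real" where
  "p_form p y1 y2 = (if y2 = 0 then 0 else norm y2 powr (p - 1) * norm_dir_deriv y2 y1)"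

definition p_psi_coercive ::
  "real \<Rightarrow> 'a set \<Rightarrow> ('a::real_normed_vector \<Rightarrow> 'a) \<Rightarrow> ('a \<Rightarrow> 'a \<Rightarrow> real)
     \<Rightarrow> ('a \<Rightarrow> 'a \<Rightarrow> real) \<Rightarrow> bool" where
  "p_psi_coercive p DA A \<psi> \<Lambda> \<longleftrightarrow>
     (\<forall>x\<in>DA. \<forall>y\<in>DA. \<Lambda> x y \<ge> 0 \<and>
        norm (x - y) powr p \<le> \<psi> x y + \<Lambda> x y * p_form p (A x - A y) (x - y))"

definition subordinate ::
  "'a set \<Rightarrow> ('a \<Rightarrow> 'b::real_normed_vector) \<Rightarrow> ('a \<Rightarrow> 'a \<Rightarrow> real)
     \<Rightarrow> ('a \<Rightarrow> 'a \<Rightarrow> real) \<Rightarrow> ('b \<Rightarrow> real) \<Rightarrow> bool" where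
  "subordinate DA B \<psi> \<gamma> \<rho> \<longleftrightarrow>
     continuous_on UNIV \<rho> \<and> (\<forall>\<xi>. \<rho> \<xi> \<ge> 0) \<and> (\<rho> \<longlongrightarrow> 0) (at 0) \<and>
     (\<forall>x\<in>DA. \<forall>y\<in>DA. \<gamma> x y \<ge> 0 \<and> \<bar>\<psi> x y\<bar> \<le> \<gamma> x y * \<rho> (B x - B y))"

end

theory Submission
  imports Defs
begin

text \<open>Put E = norm (y\<theta> - y). Since the directional derivative of the norm is bounded by the
  norm of the direction, coercivity together with subordination gives
  E^p \<le> \<gamma> \<rho>(B y\<theta>) + \<Lambda> \<parallel>A y\<theta>\<parallel> E^(p-1). Young's inequality with exponents p and p/(p-1)
  absorbs the last term into the left-hand side, and raising the resulting bound on E^p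
  to the power q/p gives the estimate for E^q.\<close>

lemma norm_diff_quotient_tendsto_norm_dir_deriv:
  fixes y x :: "'a::real_normed_vector"
  assumes "R_smooth TYPE('a)" and "y \<noteq> 0"
  shows "((\<lambda>s::real. (norm (y + s *\<^sub>R x) - norm y) / s) \<longlongrightarrow> norm_dir_deriv y x) (at 0)"
proof -
  define c where "c = norm y"
  have "c > 0" using \<open>y \<noteq> 0\<close> by (simp add: c_def)
  define u where "u = y /\<^sub>R c"
  have "norm u = 1" using \<open>c > 0\<close> by (simp add: u_def c_def)
  then obtain L where L: "((\<lambda>t::real. (norm (u + t *\<^sub>R x) - norm u) / t) \<longlongrightarrow> L) (at 0)"
    using assms(1) unfolding R_smooth_def by blast
  have "filterlim (\<lambda>s::real. s / c) (at 0) (at 0)"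
  proof (rule filterlim_atI)
    show "((\<lambda>s::real. s / c) \<longlongrightarrow> 0) (at 0)"
      using \<open>c > 0\<close> by (auto intro!: tendsto_eq_intros)
    show "\<forall>\<^sub>F s in at (0::real). s / c \<noteq> 0"
      using \<open>c > 0\<close> by (auto simp: eventually_at_filter)
  qed
  with L have "((\<lambda>s. (norm (u + (s / c) *\<^sub>R x) - norm u) / (s / c)) \<longlongrightarrow> L) (at 0)"
    by (rule filterlim_compose)
  moreover have "(norm (u + (s / c) *\<^sub>R x) - norm u) / (s / c) = (norm (y + s *\<^sub>R x) - norm y) / s"
    for s
  proof -
    have "y + s *\<^sub>R x = c *\<^sub>R (u + (s / c) *\<^sub>R x)"
      using \<open>c > 0\<close> by (simp add: u_def algebra_simps)
    then have "norm (y + s *\<^sub>R x) = c * norm (u + (s / c) *\<^sub>R x)"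
      using \<open>c > 0\<close> by simp
    then show ?thesis
      using \<open>c > 0\<close> \<open>norm u = 1\<close> by (simp add: c_def[symmetric] field_simps)
  qed
  ultimately have "((\<lambda>s::real. (norm (y + s *\<^sub>R x) - norm y) / s) \<longlongrightarrow> L) (at 0)"
    by (simp only:)
  moreover from this have "norm_dir_deriv y x = L"
    unfolding norm_dir_deriv_def by (intro tendsto_Lim) simp_all
  ultimately show ?thesis by simp
qed

lemma abs_norm_diff_quotient_le:
  fixes y x :: "'a::real_normed_vector"
  shows "\<bar>(norm (y + s *\<^sub>R x) - norm y) / s\<bar> \<le> norm x"
proof (cases "s = 0")
  case False
  have "\<bar>norm (y + s *\<^sub>R x) - norm y\<bar> \<le> norm (s *\<^sub>R x)"
    by (metis add_diff_cancel_left' norm_triangle_ineq3)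
  then show ?thesis
    using False by (simp add: abs_divide divide_le_eq mult.commute)
qed simp

lemma abs_norm_dir_deriv_le:
  fixes y x :: "'a::real_normed_vector"
  assumes "R_smooth TYPE('a)" and "y \<noteq> 0"
  shows "\<bar>norm_dir_deriv y x\<bar> \<le> norm x"
  using tendsto_rabs[OF norm_diff_quotient_tendsto_norm_dir_deriv[OF assms]]
proof (rule tendsto_upperbound)
  show "\<forall>\<^sub>F s in at 0. \<bar>(norm (y + s *\<^sub>R x) - norm y) / s\<bar> \<le> norm x"
    by (intro always_eventually allI abs_norm_diff_quotient_le)
qed simp

lemma p_form_le:
  fixes x y :: "'a::real_normed_vector"
  assumes "R_smooth TYPE('a)"
  shows "p_form p x y \<le> norm y powr (p - 1) * norm x"
proof (cases "y = 0")
  case False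
  then have "norm_dir_deriv y x \<le> norm x"
    using abs_norm_dir_deriv_le[OF assms] by (meson abs_le_D1)
  with False show ?thesis
    by (simp add: p_form_def mult_left_mono)
qed (simp add: p_form_def)

lemma powr_le_absorb_by_Young:
  fixes E a G p :: real
  assumes "p > 1" and "E \<ge> 0" and "a \<ge> 0"
    and "E powr p \<le> G + a * E powr (p - 1)"
  shows "E powr p \<le> p * G + a powr p"
proof -
  define p' where "p' = p / (p - 1)"
  have "p' > 1" and "1 / p + 1 / p' = 1"
    using \<open>p > 1\<close> by (simp_all add: p'_def field_simps)
  then have "a * E powr (p - 1) \<le> a powr p / p + (E powr (p - 1)) powr p' / p'"
    using \<open>p > 1\<close> \<open>a \<ge> 0\<close> by (intro Youngs_inequality) simp_all
  also have "(E powr (p - 1)) powr p' / p' = (p - 1) / p * E powr p"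
    using \<open>p > 1\<close> by (simp add: p'_def powr_powr)
  finally have "E powr p \<le> G + a powr p / p + (p - 1) / p * E powr p"
    using assms(4) by linarith
  moreover have "E powr p - (p - 1) / p * E powr p = E powr p / p"
    using \<open>p > 1\<close> by (simp add: field_simps)
  ultimately have "E powr p / p \<le> G + a powr p / p"
    by linarith
  then show ?thesis
    using \<open>p > 1\<close> by (simp add: field_simps)
qed

lemma coercive_subordinate_error_powr_p_le:
  fixes A :: "'a::real_normed_vector \<Rightarrow> 'a" and B :: "'a \<Rightarrow> 'b::real_normed_vector"
  assumes "p > 1" and "R_smooth TYPE('a)"
    and "p_psi_coercive p DA A \<psi> \<Lambda>" and "subordinate DA B \<psi> \<gamma> \<rho>"
    and "y \<in> DA" and "y\<theta> \<in> DA" and "A y = 0" and "B y = 0"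
  shows "norm (y\<theta> - y) powr p \<le>
    p * (\<gamma> y\<theta> y * \<rho> (B y\<theta>) + 1 / p * \<Lambda> y\<theta> y powr p * norm (A y\<theta>) powr p)"
proof -
  define E where "E = norm (y\<theta> - y)"
  define a where "a = \<Lambda> y\<theta> y * norm (A y\<theta>)"
  have "\<Lambda> y\<theta> y \<ge> 0" and coercive: "E powr p \<le> \<psi> y\<theta> y + \<Lambda> y\<theta> y * p_form p (A y\<theta>) (y\<theta> - y)"
    using assms(3,5-7) unfolding p_psi_coercive_def E_def by (metis diff_zero)+
  have subordinate: "\<psi> y\<theta> y \<le> \<gamma> y\<theta> y * \<rho> (B y\<theta>)"
    using assms(4-6,8) unfolding subordinate_def by (metis abs_le_D1 diff_zero)
  have "p_form p (A y\<theta>) (y\<theta> - y) \<le> E powr (p - 1) * norm (A y\<theta>)"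
    unfolding E_def using assms(2) by (rule p_form_le)
  then have "\<Lambda> y\<theta> y * p_form p (A y\<theta>) (y\<theta> - y) \<le> a * E powr (p - 1)"
    using \<open>\<Lambda> y\<theta> y \<ge> 0\<close> unfolding a_def by (metis mult_left_mono mult.assoc mult.commute)
  with coercive subordinate have "E powr p \<le> \<gamma> y\<theta> y * \<rho> (B y\<theta>) + a * E powr (p - 1)"
    by linarith
  then have "E powr p \<le> p * (\<gamma> y\<theta> y * \<rho> (B y\<theta>)) + a powr p"
    using \<open>p > 1\<close> \<open>\<Lambda> y\<theta> y \<ge> 0\<close> by (intro powr_le_absorb_by_Young) (simp_all add: E_def a_def)
  also have "a powr p = p * (1 / p * \<Lambda> y\<theta> y powr p * norm (A y\<theta>) powr p)"
    using \<open>p > 1\<close> \<open>\<Lambda> y\<theta> y \<ge> 0\<close> by (simp add: a_def powr_mult)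
  finally show ?thesis
    by (simp add: E_def distrib_left)
qed

theorem theorem5:
  fixes p q :: real
    and DA DB :: "'a::banach set"
    and A :: "'a \<Rightarrow> 'a" and B :: "'a \<Rightarrow> 'b::banach"
    and \<psi> \<Lambda> \<gamma> :: "'a \<Rightarrow> 'a \<Rightarrow> real" and \<rho> :: "'b \<Rightarrow> real"
    and y y\<theta> :: 'a
  assumes "p > 1" and "q > 1"
    and "R_smooth TYPE('a)"
    and "subspace DA" and "subspace DB" and "DA \<subseteq> DB"
    and "y \<in> DA" and "A y = 0" and "B y = 0"
    and "y\<theta> \<in> DA"
    and "p_psi_coercive p DA A \<psi> \<Lambda>"
    and "subordinate DA B \<psi> \<gamma> \<rho>"
  shows "norm (y\<theta> - y) powr q \<le>
    p powr (q / p) * (\<gamma> y\<theta> y * \<rho> (B y\<theta>) + 1 / p * \<Lambda> y\<theta> y powr p * norm (A y\<theta>) powr p) powr (q / p)"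
proof -
  define S where "S = \<gamma> y\<theta> y * \<rho> (B y\<theta>) + 1 / p * \<Lambda> y\<theta> y powr p * norm (A y\<theta>) powr p"
  have "norm (y\<theta> - y) powr p \<le> p * S"
    unfolding S_def by (rule coercive_subordinate_error_powr_p_le[OF assms(1,3,11,12,7,10,8,9)])
  have "norm (y\<theta> - y) powr q = (norm (y\<theta> - y) powr p) powr (q / p)"
    using \<open>p > 1\<close> by (simp add: powr_powr)
  also have "\<dots> \<le> (p * S) powr (q / p)"
    using \<open>norm (y\<theta> - y) powr p \<le> p * S\<close> \<open>p > 1\<close> \<open>q > 1\<close> by (intro powr_mono2) simp_all
  also have "\<dots> = p powr (q / p) * S powr (q / p)"
    by (rule powr_mult)
  finally show ?thesis
    unfolding S_def .
qed

end
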